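(* Let $d\ge3$, $h\ge1$, and let $\mathbf{x}_0$ be the standard basis vector of $\mathbb{Z}^V$ corresponding to the root $0$. Then the order of the image $\bar{\mathbf{x}}_0$ of $\mathbf{x}_0$ in $G(d,h)$ is $d(d-1)^h$.
   Context: Let $\mathcal{T}(d,h)$ be the rooted tree in which the root $0$ has $d$ children, every vertex at distance $1,\dots,h-1$ from the root has $d-1$ children, and the vertices at distance $h$ are leaves. Let $V$ be its vertex set, $A$ its adjacency matrix, $\Delta := dI-A$, and $\Lambda\subset\mathbb{Z}^V$ the lattice spanned by the rows of $\Delta$. Then $G(d,h):=\mathbb{Z}^V/\Lambda$; for $\mathbf{v}\in\mathbb{Z}^V$, $\bar{\mathbf{v}}$ denotes its image in $G(d,h)$. $\{\mathbf{x}_i:i\in V\}$ is the standard basis of $\mathbb{Z}^V$. *)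

theory Defs
  imports Main
begin

text \<open>Vertices of T(d,h) are encoded as lists of child indices along the path
  from the root: the root 0 is the empty list; a vertex at depth k is a list
  [c1,...,ck] with c1 < d (the root has d children) and ci < d-1 for i >= 2
  (non-root inner vertices have d-1 children); depth is at most h.\<close>

definition tree_verts :: "nat \<Rightarrow> nat \<Rightarrow> nat list set" where
  "tree_verts d h = {vs. length vs \<le> h \<and>
      (\<forall>k<length vs. vs ! k < (if k = 0 then d else d - 1))}"

definition tree_root :: "nat list" where
  "tree_root = []"

definition tree_adj :: "nat \<Rightarrow> nat \<Rightarrow> nat list \<Rightarrow> nat list \<Rightarrow> bool" where
  "tree_adj d h u v \<longleftrightarrow> u \<in> tree_verts d h \<and> v \<in> tree_verts d h \<and>
      ((\<exists>c. v = u @ [c]) \<or> (\<exists>c. u = v @ [c]))"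

definition adj_matrix :: "nat \<Rightarrow> nat \<Rightarrow> nat list \<Rightarrow> nat list \<Rightarrow> int" where
  "adj_matrix d h i j = (if tree_adj d h i j then 1 else 0)"

definition Delta :: "nat \<Rightarrow> nat \<Rightarrow> nat list \<Rightarrow> nat list \<Rightarrow> int" where
  "Delta d h i j = (if i \<in> tree_verts d h \<and> j \<in> tree_verts d h
      then (if i = j then int d else 0) - adj_matrix d h i j else 0)"

definition Lambda :: "nat \<Rightarrow> nat \<Rightarrow> (nat list \<Rightarrow> int) set" where
  "Lambda d h = {x. \<exists>c :: nat list \<Rightarrow> int.
      x = (\<lambda>j. \<Sum>i\<in>tree_verts d h. c i * Delta d h i j)}"

definition basis_vec :: "nat list \<Rightarrow> nat list \<Rightarrow> int" where
  "basis_vec i = (\<lambda>j. if j = i then 1 else 0)"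

definition quot_order :: "('a \<Rightarrow> int) set \<Rightarrow> ('a \<Rightarrow> int) \<Rightarrow> nat" where
  "quot_order L v = (if \<exists>n::nat. n > 0 \<and> (\<lambda>j. int n * v j) \<in> L
      then (LEAST n::nat. n > 0 \<and> (\<lambda>j. int n * v j) \<in> L) else 0)"

end

theory Submission
  imports Defs
begin

text \<open>Working up from the leaves, with e = d - 1 and
  G m = 1 + e + ... + e^m, a vertex at height m and its parent carry the values G m t and
  G (m+1) t, where t is an integer shared by siblings (G m > 0 makes it unique); this rests on
  the recurrence (e + 1) G (m+1) = G (m+2) + e G m. Hence c = t G (h - depth), and the root
  equation gives n = d (G h - G (h-1)) t = d e^h t; t = 1 realises n = d e^h.
  The argument only needs d \<ge> 2.\<close>

definition num_children :: "nat \<Rightarrow> nat \<Rightarrow> nat" where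
  "num_children d k = (if k = 0 then d else d - 1)"

lemma finite_tree_verts: "finite (tree_verts d h)"
proof -
  have "tree_verts d h \<subseteq> {xs. set xs \<subseteq> {..<d} \<and> length xs \<le> h}"
    by (auto simp: tree_verts_def in_set_conv_nth split: if_splits; fastforce)
  then show ?thesis
    using finite_lists_length_le[of "{..<d}" h] finite_subset by blast
qed

lemma Nil_in_tree_verts: "[] \<in> tree_verts d h"
  by (simp add: tree_verts_def)

lemma snoc_in_tree_verts_iff:
  "vs @ [a] \<in> tree_verts d h \<longleftrightarrow>
     vs \<in> tree_verts d h \<and> length vs < h \<and> a < num_children d (length vs)"
  by (auto simp: tree_verts_def num_children_def nth_append less_Suc_eq)

lemma butlast_in_tree_verts: "v \<in> tree_verts d h \<Longrightarrow> butlast v \<in> tree_verts d h"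
  by (cases v rule: rev_cases) (simp_all add: snoc_in_tree_verts_iff)

lemma tree_verts_children:
  assumes "j \<in> tree_verts d h"
  shows "{i \<in> tree_verts d h. \<exists>a. i = j @ [a]} =
    (if length j < h then (\<lambda>a. j @ [a]) ` {..<num_children d (length j)} else {})"
  using assms by (auto simp: snoc_in_tree_verts_iff)

lemma Delta_column_sum:
  assumes j: "j \<in> tree_verts d h"
  shows "(\<Sum>i\<in>tree_verts d h. c i * Delta d h i j) = int d * c j
     - (if j = [] then 0 else c (butlast j))
     - (if length j < h then (\<Sum>a<num_children d (length j). c (j @ [a])) else 0)"
proof -
  let ?V = "tree_verts d h"
  have parent_iff: "(\<exists>a. j = i @ [a]) \<longleftrightarrow> j \<noteq> [] \<and> i = butlast j" for i
    by (metis butlast_snoc snoc_eq_iff_butlast)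
  have "c i * Delta d h i j = (if i = j then int d * c i else 0)
      - (if j \<noteq> [] \<and> i = butlast j then c i else 0) - (if \<exists>a. i = j @ [a] then c i else 0)"
    if "i \<in> ?V" for i
    using that j unfolding Delta_def adj_matrix_def tree_adj_def parent_iff
    by (auto simp: algebra_simps dest: arg_cong[of _ _ length])
  then have "(\<Sum>i\<in>?V. c i * Delta d h i j) = int d * c j
      - (if j = [] then 0 else c (butlast j)) - sum c {i \<in> ?V. \<exists>a. i = j @ [a]}"
    using j butlast_in_tree_verts[OF j] finite_tree_verts[of d h]
    by (simp add: sum_subtractf sum.inter_filter sum.delta' cong: sum.cong)
  also have "sum c {i \<in> ?V. \<exists>a. i = j @ [a]} =
      (if length j < h then (\<Sum>a<num_children d (length j). c (j @ [a])) else 0)"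
    unfolding tree_verts_children[OF j] by (simp add: sum.reindex inj_on_def)
  finally show ?thesis .
qed

definition geom_sum :: "int \<Rightarrow> nat \<Rightarrow> int" where
  "geom_sum e m = (\<Sum>k\<le>m. e ^ k)"

lemma geom_sum_0 [simp]: "geom_sum e 0 = 1"
  by (simp add: geom_sum_def)

lemma geom_sum_Suc: "geom_sum e (Suc m) = geom_sum e m + e ^ Suc m"
  by (simp add: geom_sum_def)

lemma geom_sum_Suc_Horner: "geom_sum e (Suc m) = 1 + e * geom_sum e m"
  unfolding geom_sum_def sum.atMost_Suc_shift by (simp add: sum_distrib_left)

lemma geom_sum_pos: "e \<ge> 0 \<Longrightarrow> geom_sum e m > 0"
  by (induction m) (simp_all add: geom_sum_Suc add_pos_nonneg)

lemma geom_sum_recurrence: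
  "(e + 1) * geom_sum e (Suc m) = geom_sum e (Suc (Suc m)) + e * geom_sum e m"
  unfolding geom_sum_Suc_Horner[of e "Suc m"] geom_sum_Suc_Horner[of e m]
  by (simp add: algebra_simps)

lemma Delta_column_sum_geom_sum:
  assumes d: "d \<ge> 1" and j: "j \<in> tree_verts d h"
  shows "(\<Sum>i\<in>tree_verts d h. geom_sum (int d - 1) (h - length i) * Delta d h i j)
      = (if j = [] then int d * (int d - 1) ^ h else 0)"
proof -
  define e where "e = int d - 1"
  have d_eq: "int d = e + 1" and children_eq: "int (d - Suc 0) = e"
    using d by (simp_all add: e_def)
  have "length j \<le> h" using j by (simp add: tree_verts_def)
  then consider "j = []" | "j \<noteq> []" "length j = h"
    | m where "j \<noteq> []" "h - length j = Suc m"
    by (metis diff_is_0_eq le_antisym not0_implies_Suc)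
  then show ?thesis
  proof cases
    case 1
    show ?thesis
      unfolding Delta_column_sum[OF j] using 1
      by (cases h) (simp_all add: num_children_def e_def geom_sum_Suc algebra_simps)
  next
    case 2
    then have "h - length (butlast j) = Suc 0"
      by (cases j rule: rev_cases) auto
    then show ?thesis
      unfolding Delta_column_sum[OF j] using 2 by (simp add: geom_sum_Suc_Horner d_eq)
  next
    case 3
    then have "h - length (butlast j) = Suc (Suc m)" "h - Suc (length j) = m" "length j < h"
      by (cases j rule: rev_cases; simp)+
    then show ?thesis
      unfolding Delta_column_sum[OF j] using 3 geom_sum_recurrence[of e m]
      by (simp add: num_children_def children_eq d_eq e_def[symmetric])
  qed
qed

lemma root_multiple_in_Lambda:
  assumes "d \<ge> 1"
  shows "(\<lambda>j. int (d * (d - 1) ^ h) * basis_vec tree_root j) \<in> Lambda d h"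
proof -
  have column: "int (d * (d - 1) ^ h) * basis_vec tree_root j =
    (\<Sum>i\<in>tree_verts d h. geom_sum (int d - 1) (h - length i) * Delta d h i j)" for j
    using assms Delta_column_sum_geom_sum[OF assms, of j] Nil_in_tree_verts[of d h]
    by (cases "j \<in> tree_verts d h") (auto simp: basis_vec_def tree_root_def Delta_def of_nat_diff)
  then show ?thesis
    unfolding Lambda_def by (intro CollectI exI ext) (rule column)
qed

lemma ex_common_cofactor:
  fixes x g :: int
  assumes "g \<noteq> 0" and "a\<^sub>0 \<in> A"
    and "\<And>a. a \<in> A \<Longrightarrow> \<exists>t. f a = g' * t \<and> x = g * t"
  shows "\<exists>t. x = g * t \<and> (\<forall>a\<in>A. f a = g' * t)"
proof -
  obtain t where t: "x = g * t"
    using assms(2,3) by blast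
  have "f a = g' * t" if "a \<in> A" for a
    using assms(1) assms(3)[OF that] t by auto
  with t show ?thesis by blast
qed

lemma Delta_kernel_off_root:
  assumes d: "d \<ge> 2"
    and ker: "\<And>j. j \<in> tree_verts d h \<Longrightarrow> j \<noteq> [] \<Longrightarrow>
      (\<Sum>i\<in>tree_verts d h. c i * Delta d h i j) = 0"
    and v: "v \<in> tree_verts d h" "v \<noteq> []" "length v + m = h"
  shows "\<exists>t. c v = geom_sum (int d - 1) m * t \<and>
      c (butlast v) = geom_sum (int d - 1) (Suc m) * t"
  using v
proof (induction m arbitrary: v)
  case 0
  then have "c (butlast v) = int d * c v"
    using ker[of v] by (simp add: Delta_column_sum)
  then show ?case
    by (simp add: geom_sum_Suc)
next
  case (Suc m)
  define e where "e = int d - 1"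
  have children: "v @ [a] \<in> tree_verts d h \<longleftrightarrow> a < d - 1" for a
    using Suc.prems by (simp add: snoc_in_tree_verts_iff num_children_def)
  obtain t where t: "c v = geom_sum e (Suc m) * t"
    and t_children: "\<forall>a\<in>{..<d - 1}. c (v @ [a]) = geom_sum e m * t"
  proof -
    have "\<exists>t. c v = geom_sum e (Suc m) * t \<and>
        (\<forall>a\<in>{..<d - 1}. c (v @ [a]) = geom_sum e m * t)"
    proof (rule ex_common_cofactor)
      show "geom_sum e (Suc m) \<noteq> 0"
        using d geom_sum_pos[of e "Suc m"] by (simp add: e_def)
      show "0 \<in> {..<d - 1}"
        using d by simp
      show "\<exists>t. c (v @ [a]) = geom_sum e m * t \<and> c v = geom_sum e (Suc m) * t"
        if "a \<in> {..<d - 1}" for a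
        using Suc.IH[of "v @ [a]"] Suc.prems(3) children that by (simp add: e_def)
    qed
    then show thesis using that by blast
  qed
  have "0 = int d * c v - c (butlast v) - (\<Sum>a<d - 1. c (v @ [a]))"
    using ker[OF Suc.prems(1,2)] Suc.prems by (simp add: Delta_column_sum num_children_def)
  also have "(\<Sum>a<d - 1. c (v @ [a])) = e * geom_sum e m * t"
    using t_children d by (simp add: e_def of_nat_diff)
  finally have "c (butlast v) = ((e + 1) * geom_sum e (Suc m) - e * geom_sum e m) * t"
    using t by (simp add: e_def algebra_simps)
  then have "c (butlast v) = geom_sum e (Suc (Suc m)) * t"
    by (simp add: geom_sum_recurrence)
  with t show ?case
    by (auto simp: e_def)
qed

lemma dvd_of_root_multiple_in_Lambda:
  assumes d: "d \<ge> 2"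
    and n: "(\<lambda>j. int n * basis_vec tree_root j) \<in> Lambda d h"
  shows "d * (d - 1) ^ h dvd n"
proof -
  define e where "e = int d - 1"
  obtain c where c: "\<And>j. int n * basis_vec tree_root j =
      (\<Sum>i\<in>tree_verts d h. c i * Delta d h i j)"
    using n unfolding Lambda_def by (auto dest: fun_cong)
  have root_eq: "int n = int d * c [] - (if 0 < h then (\<Sum>a<d. c [a]) else 0)"
    using c[of "[]"]
    by (simp add: Delta_column_sum Nil_in_tree_verts basis_vec_def tree_root_def num_children_def)
  have "\<exists>t. int n = int d * e ^ h * t"
  proof (cases h)
    case 0
    then show ?thesis
      using root_eq by auto
  next
    case (Suc m)
    have root_children: "[a] \<in> tree_verts d h \<longleftrightarrow> a < d" for a
      using snoc_in_tree_verts_iff[of "[]" a d h] Suc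
      by (simp add: Nil_in_tree_verts num_children_def)
    have ker: "(\<Sum>i\<in>tree_verts d h. c i * Delta d h i j) = 0" if "j \<noteq> []" for j
      using c[of j] that by (simp add: basis_vec_def tree_root_def)
    obtain t where t: "c [] = geom_sum e (Suc m) * t"
      and t_children: "\<forall>a\<in>{..<d}. c [a] = geom_sum e m * t"
    proof -
      have "\<exists>t. c [] = geom_sum e (Suc m) * t \<and>
          (\<forall>a\<in>{..<d}. c [a] = geom_sum e m * t)"
      proof (rule ex_common_cofactor)
        show "geom_sum e (Suc m) \<noteq> 0"
          using d geom_sum_pos[of e "Suc m"] by (simp add: e_def)
        show "0 \<in> {..<d}"
          using d by simp
        show "\<exists>t. c [a] = geom_sum e m * t \<and> c [] = geom_sum e (Suc m) * t"
          if "a \<in> {..<d}" for a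
          using Delta_kernel_off_root[OF d ker, of "[a]" m] root_children that Suc
          by (simp add: e_def)
      qed
      then show thesis using that by blast
    qed
    have "int n = int d * (geom_sum e (Suc m) - geom_sum e m) * t"
      using root_eq t t_children Suc by (simp add: algebra_simps)
    then show ?thesis
      using Suc by (simp add: geom_sum_Suc)
  qed
  then have "int d * e ^ h dvd int n"
    by (auto simp: dvd_def)
  moreover have "int (d * (d - 1) ^ h) = int d * e ^ h"
    using d by (simp add: e_def of_nat_diff)
  ultimately show ?thesis
    by (metis of_nat_dvd_iff)
qed

lemma quot_order_eqI:
  assumes "D > 0" and "(\<lambda>j. int D * v j) \<in> L"
    and "\<And>n. (\<lambda>j. int n * v j) \<in> L \<Longrightarrow> D dvd n"
  shows "quot_order L v = D"
proof -
  have "(LEAST n. n > 0 \<and> (\<lambda>j. int n * v j) \<in> L) = D"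
    by (rule Least_equality) (use assms in \<open>auto dest: dvd_imp_le\<close>)
  then show ?thesis
    unfolding quot_order_def using assms(1,2) by auto
qed

theorem proposition7p2:
  fixes d h :: nat
  assumes "d \<ge> 3" and "h \<ge> 1"
  shows "quot_order (Lambda d h) (basis_vec tree_root) = d * (d - 1) ^ h"
proof (rule quot_order_eqI)
  show "d * (d - 1) ^ h > 0"
    using assms(1) by simp
  show "(\<lambda>j. int (d * (d - 1) ^ h) * basis_vec tree_root j) \<in> Lambda d h"
    using assms(1) by (intro root_multiple_in_Lambda) simp
  show "d * (d - 1) ^ h dvd n" if "(\<lambda>j. int n * basis_vec tree_root j) \<in> Lambda d h" for n
    using assms(1) that by (intro dvd_of_root_multiple_in_Lambda) simp_all
qed

end
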